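(* Let $x, a$ be positive real numbers and $k \geq 2$ an integer. Then \[ k\,\psi_{ak}(xk) > \psi_a(x), \] where $\psi_c(y) \coloneqq \psi(y+c)-\psi(y)$ for $c,y>0$.
   Context: $\psi=\Gamma'/\Gamma$ is the digamma function. *)

theory Defs
  imports "HOL-Analysis.Analysis"
begin

definition psi_shift :: "real \<Rightarrow> real \<Rightarrow> real" where
  "psi_shift c y = Digamma (y + c) - Digamma y"

end

theory Submission
  imports Defs
begin

text \<open>Writing \<open>\<psi>\<^sub>c(y) = \<Sum>\<^sub>n (1/(y+n) - 1/(y+c+n))\<close>, the series for
  \<open>k \<psi>\<^sub>a\<^sub>k(xk)\<close> has positive terms \<open>k (1/(xk+n) - 1/(xk+ak+n))\<close>, and those with
  \<open>n = km\<close> are exactly the terms \<open>1/(x+m) - 1/(x+a+m)\<close> of \<open>\<psi>\<^sub>a(x)\<close>.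
  Dropping the remaining terms, among them the positive one with \<open>n = 1\<close>, gives the strict
  inequality.\<close>

lemma suminf_reindex_less:
  fixes f :: "nat \<Rightarrow> real"
  assumes "summable f" and "inj g" and "\<And>n. 0 \<le> f n"
    and "j \<notin> range g" and "f j > 0"
  shows "suminf (f \<circ> g) < suminf f"
proof -
  define h where "h = f(j := 0)"
  have h_nonneg: "0 \<le> h n" for n
    using assms(3) by (simp add: h_def)
  have f_split: "f = (\<lambda>n. h n + (if n = j then f j else 0))"
    by (auto simp: h_def)
  have "(\<lambda>n. if n = j then f j else 0) sums f j"
    by (rule sums_single)
  moreover have "summable h"
    by (rule summable_comparison_test'[OF assms(1)]) (use assms(3) in \<open>simp add: h_def\<close>)
  ultimately have "f sums (suminf h + f j)"
    by (subst f_split) (intro sums_add summable_sums)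
  then have suminf_f: "suminf f = suminf h + f j"
    by (simp add: sums_iff)
  have "h (g n) = f (g n)" for n
    using assms(4) by (auto simp: h_def)
  then have "suminf (f \<circ> g) = suminf (h \<circ> g)"
    by (simp add: comp_def)
  also have "suminf (h \<circ> g) \<le> suminf h"
    by (rule suminf_reindex_mono[OF \<open>summable h\<close> assms(2) h_nonneg])
  finally show ?thesis
    using suminf_f assms(5) by simp
qed

lemma psi_shift_sums:
  fixes y c :: real
  assumes "y \<noteq> 0" and "y + c \<noteq> 0"
  shows "(\<lambda>n. inverse (y + real n) - inverse (y + c + real n)) sums psi_shift c y"
proof -
  have Digamma_y: "(\<lambda>n. inverse (real (Suc n)) - inverse (y + real n))
                   sums (Digamma y + euler_mascheroni)"
    using summable_Digamma[OF assms(1)] by (simp add: Digamma_def summable_sums)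
  have Digamma_yc: "(\<lambda>n. inverse (real (Suc n)) - inverse (y + c + real n))
                   sums (Digamma (y + c) + euler_mascheroni)"
    using summable_Digamma[OF assms(2)] by (simp add: Digamma_def summable_sums)
  from sums_diff[OF Digamma_yc Digamma_y] show ?thesis
    by (simp add: psi_shift_def)
qed

theorem lemma5p4:
  fixes x a :: real and k :: nat
  assumes "x > 0" and "a > 0" and "k \<ge> 2"
  shows "real k * psi_shift (a * real k) (x * real k) > psi_shift a x"
proof -
  have k_pos: "real k > 0"
    using assms(3) by simp
  have xk_pos: "x * real k > 0" and xak_pos: "x * real k + a * real k > 0"
    using assms(1,2) k_pos by (simp_all add: add_pos_pos)
  define f where
    "f n = real k * (inverse (x * real k + real n) - inverse (x * real k + a * real k + real n))"
    for n
  have f_sums: "f sums (real k * psi_shift (a * real k) (x * real k))"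
    unfolding f_def by (intro sums_mult psi_shift_sums; use xk_pos xak_pos in linarith)
  have f_pos: "f n > 0" for n
    unfolding f_def using assms k_pos
    by (simp add: less_imp_inverse_less add_pos_nonneg)
  have f_multiple: "f (k * m) = inverse (x + real m) - inverse (x + a + real m)" for m
  proof -
    have "f (k * m) = real k * (inverse (real k * (x + real m)) - inverse (real k * (x + a + real m)))"
      by (simp add: f_def algebra_simps)
    then show ?thesis
      using k_pos by (simp add: right_diff_distrib mult.assoc[symmetric])
  qed
  have "psi_shift a x = suminf (f \<circ> (\<lambda>m. k * m))"
    using psi_shift_sums[of x a] assms by (simp add: f_multiple comp_def sums_iff)
  also have "\<dots> < suminf f"
  proof (rule suminf_reindex_less[where j = 1])
    show "1 \<notin> range (\<lambda>m. k * m)"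
      using assms(3) by (auto simp: nat_mult_eq_1_iff)
  qed (use f_sums f_pos k_pos in \<open>auto simp: sums_iff inj_def less_imp_le\<close>)
  also have "\<dots> = real k * psi_shift (a * real k) (x * real k)"
    using f_sums by (simp add: sums_iff)
  finally show ?thesis .
qed

end
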